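(* For every $m\ge1$, every capacity vector $\vec k$ with $k_1+\dots+k_m<n$ and every percentile vector $\vec v\in[0,1]^m$, the percentile mechanism $\mathcal{PM}_{\vec v}$ is absolutely truthful.
   Context: There are $n$ agents with positions $\vec x=(x_1,\dots,x_n)\in[0,1]^n$ and $m$ facilities with positive integer capacities $\vec k=(k_1,\dots,k_m)$, $\sum_j k_j<n$. A facility location is $\vec y=(y_1,\dots,y_m)$, $y_j$ the position of the facility of capacity $k_j$. A fixed priority order on agents breaks ties. FCFS game induced by $(\vec x,\vec y)$: each agent $i$ chooses $s_i\in\{1,\dots,m\}$; $\mathcal S_j$ is the set of agents choosing $j$; $T_j\subseteq\mathcal S_j$ consists of the $\min(k_j,|\mathcal S_j|)$ agents of $\mathcal S_j$ closest to $y_j$ (ties by priority); utility $u_i(\vec x,\vec y;\vec s)=1-|x_i-y_j|$ if $i\in T_j$, and $0$ otherwise. A mechanism is a map $M:[0,1]^n\to\mathbb R^m$. $M$ is absolutely truthful if for every agent $i$, every $\vec x\in[0,1]^n$, every $x_i'\in[0,1]$ and every $\vec s_{-i}\in\{1,\dots,m\}^{n-1}$, $\max_{s_i}u_i(\vec x,M(\vec x);s_i,\vec s_{-i})\ge \max_{s_i'}u_i(\vec x,M(x_i',\vec x_{-i});s_i',\vec s_{-i})$. The percentile mechanism $\mathcal{PM}_{\vec v}$ associated with $\vec v\in[0,1]^m$: sort the reports so that $x_1\le\dots\le x_n$ and set $y_j=x_{i_j}$ with $i_j=\lfloor (n-1)v_j\rfloor+1$ for every $j$. *)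

theory Defs
  imports Complex_Main
begin

text \<open>Agents are 0..n-1, facilities are 0..m-1. Positions x :: nat => real,
  capacities k :: nat => nat, facility location y :: nat => real,
  strategy profile s :: nat => nat (s i is the facility chosen by agent i).
  The priority order is given by an injective rank function prio on the agents:
  agent a has priority over agent b iff prio a < prio b.\<close>

definition choosers :: "nat \<Rightarrow> (nat \<Rightarrow> nat) \<Rightarrow> nat \<Rightarrow> nat set" where
  "choosers n s j = {i. i < n \<and> s i = j}"

definition beats :: "(nat \<Rightarrow> nat) \<Rightarrow> (nat \<Rightarrow> real) \<Rightarrow> real \<Rightarrow> nat \<Rightarrow> nat \<Rightarrow> bool" where
  "beats prio x p a b \<longleftrightarrow>
     \<bar>x a - p\<bar> < \<bar>x b - p\<bar> \<or> (\<bar>x a - p\<bar> = \<bar>x b - p\<bar> \<and> prio a < prio b)"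

text \<open>T_j: the min(k_j, |S_j|) agents of S_j closest to y_j, ties broken by priority.\<close>
definition served :: "nat \<Rightarrow> (nat \<Rightarrow> nat) \<Rightarrow> (nat \<Rightarrow> nat) \<Rightarrow> (nat \<Rightarrow> real)
    \<Rightarrow> (nat \<Rightarrow> real) \<Rightarrow> (nat \<Rightarrow> nat) \<Rightarrow> nat \<Rightarrow> nat set" where
  "served n k prio x y s j =
     {i \<in> choosers n s j.
        card {i' \<in> choosers n s j. beats prio x (y j) i' i} < k j}"

definition utility :: "nat \<Rightarrow> (nat \<Rightarrow> nat) \<Rightarrow> (nat \<Rightarrow> nat) \<Rightarrow> (nat \<Rightarrow> real)
    \<Rightarrow> (nat \<Rightarrow> real) \<Rightarrow> (nat \<Rightarrow> nat) \<Rightarrow> nat \<Rightarrow> real" where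
  "utility n k prio x y s i =
     (if i \<in> served n k prio x y s (s i) then 1 - \<bar>x i - y (s i)\<bar> else 0)"

definition best_utility :: "nat \<Rightarrow> nat \<Rightarrow> (nat \<Rightarrow> nat) \<Rightarrow> (nat \<Rightarrow> nat) \<Rightarrow> (nat \<Rightarrow> real)
    \<Rightarrow> (nat \<Rightarrow> real) \<Rightarrow> (nat \<Rightarrow> nat) \<Rightarrow> nat \<Rightarrow> real" where
  "best_utility n m k prio x y s i =
     Max ((\<lambda>si. utility n k prio x y (s(i := si)) i) ` {..<m})"

definition absolutely_truthful :: "nat \<Rightarrow> nat \<Rightarrow> (nat \<Rightarrow> nat) \<Rightarrow> (nat \<Rightarrow> nat)
    \<Rightarrow> ((nat \<Rightarrow> real) \<Rightarrow> (nat \<Rightarrow> real)) \<Rightarrow> bool" where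
  "absolutely_truthful n m k prio M \<longleftrightarrow>
     (\<forall>i < n. \<forall>x x' s.
        (\<forall>l < n. x l \<in> {0..1}) \<longrightarrow> x' \<in> {0..1} \<longrightarrow> (\<forall>l < n. s l < m) \<longrightarrow>
        best_utility n m k prio x (M x) s i \<ge> best_utility n m k prio x (M (x(i := x'))) s i)"

text \<open>Percentile mechanism: y_j is the (floor((n-1) v_j) + 1)-th smallest report
  (1-based), i.e. entry floor((n-1) v_j) (0-based) of the sorted report list.\<close>
definition percentile_mechanism :: "nat \<Rightarrow> (nat \<Rightarrow> real) \<Rightarrow> (nat \<Rightarrow> real) \<Rightarrow> (nat \<Rightarrow> real)" where
  "percentile_mechanism n v x =
     (\<lambda>j. sort (map x [0..<n]) ! nat \<lfloor>(real n - 1) * v j\<rfloor>)"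

end

theory Submission
  imports Defs
begin

text \<open>The \<open>r\<close>-th order statistic of the reports satisfies a downward closed
  property iff more than \<open>r\<close> reports do. Counting reports below it shows that, whatever
  agent \<open>i\<close> reports, the truthful statistic lies between \<open>x i\<close> and the manipulated one
  (stated as \<open>\<bar>x i - y'\<bar> = \<bar>x i - y\<bar> + \<bar>y - y'\<bar>\<close>). So each facility of a percentile
  mechanism only moves away from \<open>i\<close>, and every competitor beating \<open>i\<close> at the truthful
  location still beats it at the manipulated one: whichever facility \<open>i\<close> picks, lying
  can only worsen its rank and increase its distance.\<close>

lemma sorted_nth_iff_length_filter:
  assumes "sorted xs" and "r < length xs"
    and down_closed: "\<And>z z'. P z \<Longrightarrow> z' \<le> z \<Longrightarrow> P z'"
  shows "P (xs ! r) \<longleftrightarrow> r < length (filter P xs)"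
  using assms(1,2)
proof (induction xs arbitrary: r)
  case Nil
  then show ?case by simp
next
  case (Cons z zs)
  show ?case
  proof (cases "P z")
    case True
    then show ?thesis using Cons by (cases r) auto
  next
    case False
    then have "\<forall>z' \<in> set (z # zs). \<not> P z'"
      using Cons.prems(1) down_closed by auto
    then show ?thesis
      using Cons.prems(2) nth_mem[of r "z # zs"] by (auto simp: filter_empty_conv)
  qed
qed

lemma sort_nth_iff_card:
  fixes x :: "nat \<Rightarrow> 'a::linorder"
  assumes "r < n" and "\<And>z z'. P z \<Longrightarrow> z' \<le> z \<Longrightarrow> P z'"
  shows "P (sort (map x [0..<n]) ! r) \<longleftrightarrow> r < card {l. l < n \<and> P (x l)}"
proof -
  have "P (sort (map x [0..<n]) ! r) \<longleftrightarrow> r < length (filter P (sort (map x [0..<n])))"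
    by (rule sorted_nth_iff_length_filter) (use assms in auto)
  also have "length (filter P (sort (map x [0..<n]))) = length (filter P (map x [0..<n]))"
    by (metis filter_sort length_sort)
  also have "\<dots> = card {l. l < n \<and> P (x l)}"
    by (simp add: length_filter_conv_card, intro arg_cong[where f = card]) auto
  finally show ?thesis .
qed

lemma sort_nth_update_le:
  fixes x :: "nat \<Rightarrow> 'a::linorder"
  assumes "r < n" and "sort (map x [0..<n]) ! r < x i"
  shows "sort (map (x(i := a)) [0..<n]) ! r \<le> sort (map x [0..<n]) ! r"
proof -
  let ?y = "sort (map x [0..<n]) ! r"
  have iff: "sort (map x' [0..<n]) ! r \<le> ?y \<longleftrightarrow> r < card {l. l < n \<and> x' l \<le> ?y}"
    for x' :: "nat \<Rightarrow> 'a"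
    using \<open>r < n\<close> by (rule sort_nth_iff_card) (rule order_trans)
  have "r < card {l. l < n \<and> x l \<le> ?y}"
    using iff[of x] by simp
  also have "\<dots> \<le> card {l. l < n \<and> (x(i := a)) l \<le> ?y}"
    using assms(2) by (intro card_mono) auto
  finally show ?thesis
    using iff[of "x(i := a)"] by simp
qed

lemma sort_nth_update_ge:
  fixes x :: "nat \<Rightarrow> 'a::linorder"
  assumes "r < n" and "x i < sort (map x [0..<n]) ! r"
  shows "sort (map x [0..<n]) ! r \<le> sort (map (x(i := a)) [0..<n]) ! r"
proof (rule ccontr)
  let ?y = "sort (map x [0..<n]) ! r"
  have iff: "sort (map x' [0..<n]) ! r < ?y \<longleftrightarrow> r < card {l. l < n \<and> x' l < ?y}"
    for x' :: "nat \<Rightarrow> 'a"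
    using \<open>r < n\<close> by (rule sort_nth_iff_card) (rule le_less_trans)
  assume "\<not> ?thesis"
  then have "r < card {l. l < n \<and> (x(i := a)) l < ?y}"
    using iff[of "x(i := a)"] by (simp only: not_le)
  also have "\<dots> \<le> card {l. l < n \<and> x l < ?y}"
    using assms(2) by (intro card_mono) auto
  finally show False
    using iff[of x] by simp
qed

lemma sort_nth_update_between:
  fixes x :: "nat \<Rightarrow> real" and a :: real and i :: nat
  assumes "r < n"
  defines "y \<equiv> sort (map x [0..<n]) ! r"
    and "y' \<equiv> sort (map (x(i := a)) [0..<n]) ! r"
  shows "\<bar>x i - y'\<bar> = \<bar>x i - y\<bar> + \<bar>y - y'\<bar>"
proof -
  have "y' \<le> y" if "y < x i"
    using sort_nth_update_le[OF assms(1)] that unfolding y_def y'_def .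
  moreover have "y \<le> y'" if "x i < y"
    using sort_nth_update_ge[OF assms(1)] that unfolding y_def y'_def .
  ultimately show ?thesis
    by (cases "x i" y rule: linorder_cases) auto
qed

lemma percentile_index_less:
  assumes "0 < n" and "v \<in> {0..1}"
  shows "nat \<lfloor>(real n - 1) * v\<rfloor> < n"
proof -
  have "(real n - 1) * v \<le> real n - 1"
    using assms by (simp add: mult_left_le)
  then have "\<lfloor>(real n - 1) * v\<rfloor> \<le> int n - 1"
    by (metis floor_mono floor_of_int of_int_1 of_int_diff of_int_of_nat_eq)
  then show ?thesis
    using assms(1) by linarith
qed

lemma percentile_mechanism_between:
  fixes x :: "nat \<Rightarrow> real" and a :: real
  assumes "i < n" and "v j \<in> {0..1}"
  defines "y \<equiv> percentile_mechanism n v x j"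
    and "y' \<equiv> percentile_mechanism n v (x(i := a)) j"
  shows "\<bar>x i - y'\<bar> = \<bar>x i - y\<bar> + \<bar>y - y'\<bar>"
  unfolding y_def y'_def percentile_mechanism_def
  using percentile_index_less[of n "v j"] assms(1,2) by (intro sort_nth_update_between) simp

lemma percentile_mechanism_mem:
  assumes "0 < n" and "v j \<in> {0..1}"
  shows "percentile_mechanism n v x j \<in> x ` {..<n}"
proof -
  have "sort (map x [0..<n]) ! nat \<lfloor>(real n - 1) * v j\<rfloor> \<in> set (sort (map x [0..<n]))"
    using percentile_index_less[OF assms] by (intro nth_mem) simp
  then show ?thesis
    unfolding percentile_mechanism_def by auto
qed

lemma beats_if_between:
  assumes "\<bar>x i - q'\<bar> = \<bar>x i - q\<bar> + \<bar>q - q'\<bar>" and "beats prio x q a i"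
  shows "beats prio x q' a i"
proof -
  have "\<bar>x a - q'\<bar> \<le> \<bar>x a - q\<bar> + \<bar>q - q'\<bar>" by linarith
  then show ?thesis using assms unfolding beats_def by linarith
qed

lemma utility_le_if_between:
  assumes "\<bar>x i - y' (s i)\<bar> = \<bar>x i - y (s i)\<bar> + \<bar>y (s i) - y' (s i)\<bar>"
    and "\<bar>x i - y (s i)\<bar> \<le> 1"
  shows "utility n k prio x y' s i \<le> utility n k prio x y s i"
proof -
  let ?C = "choosers n s (s i)"
  have "card {a \<in> ?C. beats prio x (y (s i)) a i} \<le> card {a \<in> ?C. beats prio x (y' (s i)) a i}"
    using beats_if_between[where x = x and i = i, OF assms(1)] by (intro card_mono) (auto simp: choosers_def)
  then have "i \<in> served n k prio x y' s (s i) \<Longrightarrow> i \<in> served n k prio x y s (s i)"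
    unfolding served_def by auto
  then show ?thesis
    using assms unfolding utility_def by auto
qed

lemma best_utility_le_if_between:
  assumes "0 < m"
    and "\<And>j. j < m \<Longrightarrow> \<bar>x i - y' j\<bar> = \<bar>x i - y j\<bar> + \<bar>y j - y' j\<bar>"
    and "\<And>j. j < m \<Longrightarrow> \<bar>x i - y j\<bar> \<le> 1"
  shows "best_utility n m k prio x y' s i \<le> best_utility n m k prio x y s i"
proof -
  have "utility n k prio x y' (s(i := j)) i \<le> utility n k prio x y (s(i := j)) i"
    if "j < m" for j
    using assms(2,3)[OF that] by (intro utility_le_if_between) simp_all
  then show ?thesis
    unfolding best_utility_def using assms(1)
    by (intro Max.boundedI) (auto intro: order_trans[OF _ Max_ge])
qed

text \<open>Only \<open>m \<ge> 1\<close> (a nonempty choice of facilities) and \<open>v j \<in> {0..1}\<close> (percentile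
  indices in range) are used: truthfulness holds for arbitrary capacities and priorities.\<close>

theorem theorem2:
  fixes n m :: nat and k :: "nat \<Rightarrow> nat" and prio :: "nat \<Rightarrow> nat" and v :: "nat \<Rightarrow> real"
  assumes "m \<ge> 1"
    and "\<forall>j < m. k j > 0"
    and "(\<Sum>j<m. k j) < n"
    and "inj_on prio {..<n}"
    and "\<forall>j < m. v j \<in> {0..1}"
  shows "absolutely_truthful n m k prio (percentile_mechanism n v)"
  unfolding absolutely_truthful_def
proof (intro allI impI)
  fix i x x' s
  assume i: "i < n" and x: "\<forall>l<n. x l \<in> {0..1::real}"
  let ?y = "percentile_mechanism n v x" and ?y' = "percentile_mechanism n v (x(i := x'))"
  show "best_utility n m k prio x ?y' s i \<le> best_utility n m k prio x ?y s i"
  proof (rule best_utility_le_if_between)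
    show "0 < m"
      using assms(1) by simp
    show "\<bar>x i - ?y' j\<bar> = \<bar>x i - ?y j\<bar> + \<bar>?y j - ?y' j\<bar>" if "j < m" for j
      using percentile_mechanism_between[OF i] assms(5) that by blast
    show "\<bar>x i - ?y j\<bar> \<le> 1" if j: "j < m" for j
    proof -
      obtain l where "l < n" and "?y j = x l"
        using percentile_mechanism_mem[of n v j x] assms(5) j i by fastforce
      then show ?thesis
        using x[rule_format, OF i] x[rule_format, OF \<open>l < n\<close>] by auto
    qed
  qed
qed

end
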